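(* For every integer $N\ge 0$, let $T(N)$ be the number of tilings of a $3\times 3\times n$ box, $n=2N/3$, by $N$ bricks of size $1\times 2\times 3$ (and $0$ if $3\nmid N$). Then, as formal power series, \[ \sum_{N\ge 0} T(N)\,z^N=\frac{1-z^3}{1-7z^3-22z^6-36z^9}. \]
   Context: A tiling of a $k\times m\times n$ box (made of $kmn$ unit cubes) by $a\times b\times c$ bricks is a partition of the box into non-overlapping axis-parallel boxes with integer corner coordinates, each congruent (by an axis-permuting placement) to the $a\times b\times c$ brick; all orientations are allowed. Tilings related by symmetries of the box are counted as distinct. The empty tiling counts once for $N=0$. *)

theory Defs
  imports "HOL-Computational_Algebra.Formal_Power_Series"
begin

text \<open>Unit cubes of a box are indexed by their lower corners (x,y,z).\<close>

definition box_cells :: "nat \<Rightarrow> nat \<Rightarrow> nat \<Rightarrow> (nat \<times> nat \<times> nat) set" where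
  "box_cells k m n = {0..<k} \<times> {0..<m} \<times> {0..<n}"

definition brick_at :: "nat \<Rightarrow> nat \<Rightarrow> nat \<Rightarrow> nat \<Rightarrow> nat \<Rightarrow> nat \<Rightarrow> (nat \<times> nat \<times> nat) set" where
  "brick_at x y z d1 d2 d3 = {x..<x+d1} \<times> {y..<y+d2} \<times> {z..<z+d3}"

definition is_orientation :: "nat \<Rightarrow> nat \<Rightarrow> nat \<Rightarrow> nat \<Rightarrow> nat \<Rightarrow> nat \<Rightarrow> bool" where
  "is_orientation a b c d1 d2 d3 \<longleftrightarrow>
     (d1, d2, d3) \<in> {(a,b,c), (a,c,b), (b,a,c), (b,c,a), (c,a,b), (c,b,a)}"

definition is_brick :: "nat \<Rightarrow> nat \<Rightarrow> nat \<Rightarrow> (nat \<times> nat \<times> nat) set \<Rightarrow> bool" where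
  "is_brick a b c B \<longleftrightarrow>
     (\<exists>x y z d1 d2 d3. is_orientation a b c d1 d2 d3 \<and> B = brick_at x y z d1 d2 d3)"

text \<open>Tilings are counted as
  distinct sets of bricks (box symmetries are not factored out).\<close>

definition tilings :: "nat \<Rightarrow> nat \<Rightarrow> nat \<Rightarrow> nat \<Rightarrow> nat \<Rightarrow> nat \<Rightarrow> (nat \<times> nat \<times> nat) set set set" where
  "tilings k m n a b c =
     {P. (\<forall>B\<in>P. is_brick a b c B)
       \<and> (\<forall>B\<in>P. \<forall>C\<in>P. B \<noteq> C \<longrightarrow> B \<inter> C = {})
       \<and> \<Union>P = box_cells k m n}"

definition T :: "nat \<Rightarrow> nat" where
  "T N = (if 3 dvd N then card {P \<in> tilings 3 3 (2 * N div 3) 1 2 3. card P = N} else 0)"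

end

theory Submission
  imports Defs "HOL-Library.Product_Lexorder" "HOL-Library.List_Lexorder"
begin

text \<open>A transfer-matrix argument. The box is filled from the bottom, always placing a brick at
  the first free cell of the lowest unfilled layer; once that layer is full, the remaining region
  is determined by the cells already occupied in the two layers above it, shifted down by one.
  Counting completions is linear in weighted lists of such profiles, and filling one layer is an
  explicit linear map on them. A verified computation shows that, starting from the empty
  profile, six layers give 7 times four layers plus 22 times two layers plus 36 times the empty
  profile. This is the recurrence behind the denominator, and the initial values
  T 0, T 3, T 6 = 1, 6, 64 give the numerator.\<close>

unbundle fps_syntax

type_synonym cell = "nat \<times> nat \<times> nat"

section \<open>Tilings of arbitrary regions\<close>

definition region_tilings :: "nat \<Rightarrow> nat \<Rightarrow> nat \<Rightarrow> cell set \<Rightarrow> cell set set set" where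
  "region_tilings a b c A =
     {P. (\<forall>B\<in>P. is_brick a b c B) \<and> (\<forall>B\<in>P. \<forall>C\<in>P. B \<noteq> C \<longrightarrow> B \<inter> C = {}) \<and> \<Union>P = A}"

definition tiling_count :: "nat \<Rightarrow> nat \<Rightarrow> nat \<Rightarrow> cell set \<Rightarrow> nat" where
  "tiling_count a b c A = card (region_tilings a b c A)"

lemma tilings_eq_region_tilings: "tilings k m n a b c = region_tilings a b c (box_cells k m n)"
  by (simp add: tilings_def region_tilings_def)

lemma finite_region_tilings: "finite A \<Longrightarrow> finite (region_tilings a b c A)"
  by (rule finite_subset[of _ "Pow (Pow A)"]) (auto simp: region_tilings_def)

lemma region_tilings_image:
  fixes f :: "cell \<Rightarrow> cell"
  assumes inj: "inj f"
    and brick_image: "\<And>B. is_brick a b c B \<Longrightarrow> is_brick a b c (f ` B)"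
    and brick_preimage: "\<And>B. is_brick a b c B \<Longrightarrow> B \<subseteq> f ` A \<Longrightarrow> is_brick a b c (f -` B)"
  shows "region_tilings a b c (f ` A) = image (image f) ` region_tilings a b c A"
proof
  show "image (image f) ` region_tilings a b c A \<subseteq> region_tilings a b c (f ` A)"
  proof clarify
    fix Q assume Q: "Q \<in> region_tilings a b c A"
    have "f ` B \<inter> f ` C = {}" if "B \<in> Q" "C \<in> Q" "f ` B \<noteq> f ` C" for B C
    proof -
      have "B \<noteq> C" using that(3) by blast
      then have "B \<inter> C = {}" using Q that(1,2) unfolding region_tilings_def by blast
      then show ?thesis by (simp add: image_Int[OF inj, symmetric])
    qed
    then show "image f ` Q \<in> region_tilings a b c (f ` A)"
      using Q brick_image by (auto simp: region_tilings_def)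
  qed
next
  show "region_tilings a b c (f ` A) \<subseteq> image (image f) ` region_tilings a b c A"
  proof
    fix P assume P: "P \<in> region_tilings a b c (f ` A)"
    then have bricks: "is_brick a b c B" "B \<subseteq> f ` A" if "B \<in> P" for B
      using that by (auto simp: region_tilings_def)
    have P_eq: "P = image f ` vimage f ` P"
    proof -
      have "f ` f -` B = B" if "B \<in> P" for B using bricks(2)[OF that] by blast
      then show ?thesis by (simp add: image_image cong: image_cong)
    qed
    have "is_brick a b c (f -` B)" if "B \<in> P" for B
      using bricks[OF that] brick_preimage by blast
    moreover have "f -` B \<inter> f -` C = {}" if "B \<in> P" "C \<in> P" "f -` B \<noteq> f -` C" for B C
    proof -
      have "B \<noteq> C" using that(3) by blast
      then have "B \<inter> C = {}" using P that(1,2) unfolding region_tilings_def by blast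
      then show ?thesis by (simp add: vimage_Int[symmetric])
    qed
    moreover have "\<Union>(vimage f ` P) = A"
      using P inj by (auto simp: region_tilings_def vimage_Union[symmetric] inj_vimage_image_eq)
    ultimately have "vimage f ` P \<in> region_tilings a b c A"
      by (auto simp: region_tilings_def)
    with P_eq show "P \<in> image (image f) ` region_tilings a b c A" by blast
  qed
qed

lemma tiling_count_image:
  fixes f :: "cell \<Rightarrow> cell"
  assumes "inj f"
    and "\<And>B. is_brick a b c B \<Longrightarrow> is_brick a b c (f ` B)"
    and "\<And>B. is_brick a b c B \<Longrightarrow> B \<subseteq> f ` A \<Longrightarrow> is_brick a b c (f -` B)"
  shows "tiling_count a b c (f ` A) = tiling_count a b c A"
proof -
  have "inj (image f)" using inj_on_image[of f UNIV] assms(1) by simp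
  then have "inj (image (image f))" using inj_on_image[of "image f" UNIV] by simp
  then have "card (image (image f) ` region_tilings a b c A) = card (region_tilings a b c A)"
    by (metis card_image inj_on_subset subset_UNIV)
  then show ?thesis
    using region_tilings_image[OF assms] by (simp add: tiling_count_def)
qed

lemma region_tilings_by_cell:
  assumes "p \<in> A"
  shows "region_tilings a b c A =
    (\<Union>B\<in>{B. is_brick a b c B \<and> p \<in> B \<and> B \<subseteq> A}. insert B ` region_tilings a b c (A - B))"
    (is "_ = ?U")
proof
  show "region_tilings a b c A \<subseteq> ?U"
  proof
    fix P assume P: "P \<in> region_tilings a b c A"
    then obtain B where B: "B \<in> P" "p \<in> B" using assms by (auto simp: region_tilings_def)
    have "P - {B} \<in> region_tilings a b c (A - B)"
      using P B by (auto simp: region_tilings_def)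
    moreover have "is_brick a b c B" "B \<subseteq> A" using P B by (auto simp: region_tilings_def)
    ultimately show "P \<in> ?U"
      using B by (auto intro!: image_eqI[of P "insert B" "P - {B}"])
  qed
next
  show "?U \<subseteq> region_tilings a b c A"
  proof clarify
    fix B P assume "is_brick a b c B" "B \<subseteq> A" and P: "P \<in> region_tilings a b c (A - B)"
    moreover have "B \<inter> C = {}" if "C \<in> P" for C
      using P that by (auto simp: region_tilings_def)
    ultimately show "insert B P \<in> region_tilings a b c A"
      unfolding region_tilings_def by (auto simp: Int_commute)
  qed
qed

lemma tiling_count_split:
  assumes "finite A" and "p \<in> A"
  shows "tiling_count a b c A =
    (\<Sum>B\<in>{B. is_brick a b c B \<and> p \<in> B \<and> B \<subseteq> A}. tiling_count a b c (A - B))"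
proof -
  let ?Bs = "{B. is_brick a b c B \<and> p \<in> B \<and> B \<subseteq> A}"
  have "finite ?Bs" using assms(1) by (auto intro: finite_subset[of _ "Pow A"])
  moreover have "finite (insert B ` region_tilings a b c (A - B))" for B
    using assms(1) by (simp add: finite_region_tilings)
  moreover have "insert B ` region_tilings a b c (A - B) \<inter> insert C ` region_tilings a b c (A - C) = {}"
    if "B \<in> ?Bs" "C \<in> ?Bs" "B \<noteq> C" for B C
    \<comment> \<open>a tiling contains only one tile through p\<close>
    using that by (fastforce simp: region_tilings_def)
  moreover have "inj_on (insert B) (region_tilings a b c (A - B))" if "B \<in> ?Bs" for B
  proof (rule inj_onI)
    fix P Q assume "P \<in> region_tilings a b c (A - B)" "Q \<in> region_tilings a b c (A - B)"
      and "insert B P = insert B Q"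
    moreover have "B \<notin> R" if "R \<in> region_tilings a b c (A - B)" for R
      using that \<open>B \<in> ?Bs\<close> by (auto simp: region_tilings_def)
    ultimately show "P = Q" by (metis insert_ident)
  qed
  ultimately show ?thesis
    unfolding tiling_count_def region_tilings_by_cell[OF assms(2)]
    by (simp add: card_UN_disjoint card_image)
qed

lemma card_brick: "is_brick a b c B \<Longrightarrow> finite B \<and> card B = a * b * c"
  by (auto simp: is_brick_def is_orientation_def brick_at_def card_cartesian_product)

lemma card_tiled_region:
  assumes P: "P \<in> region_tilings a b c A" and "finite A"
  shows "card A = a * b * c * card P"
proof -
  have "card A = card (\<Union>P)" using P by (simp add: region_tilings_def)
  also have "\<dots> = (\<Sum>B\<in>P. card B)"
    using P card_brick by (intro card_Union_disjoint) (auto simp: region_tilings_def pairwise_def disjnt_def)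
  also have "\<dots> = (\<Sum>B\<in>P. a * b * c)"
    using P card_brick by (intro sum.cong) (auto simp: region_tilings_def)
  also have "\<dots> = a * b * c * card P" by simp
  finally show ?thesis .
qed

definition lift :: "cell \<Rightarrow> cell" where
  "lift = (\<lambda>(x, y, z). (x, y, Suc z))"

lemma inj_lift: "inj lift"
  by (auto simp: inj_def lift_def)

lemma lift_brick_at: "lift ` brick_at x y z d1 d2 d3 = brick_at x y (Suc z) d1 d2 d3"
  by (force simp: lift_def brick_at_def image_iff less_eq_nat.simps(2) split: nat.splits)

lemma brick_at_subset_dims:
  assumes "0 < d1" "0 < d2" "0 < d3" and "brick_at x y z d1 d2 d3 \<subseteq> brick_at x y z e1 e2 e3"
  shows "d1 \<le> e1 \<and> d2 \<le> e2 \<and> d3 \<le> e3"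
proof -
  have "(x + d1 - 1, y + d2 - 1, z + d3 - 1) \<in> brick_at x y z e1 e2 e3"
    using assms by (intro subsetD[OF assms(4)]) (auto simp: brick_at_def)
  then have "d1 - 1 < e1" "d2 - 1 < e2" "d3 - 1 < e3" by (auto simp: brick_at_def)
  with assms(1-3) show ?thesis by linarith
qed

locale brick_shape =
  fixes a b c :: nat
  assumes dims_pos: "0 < a" "0 < b" "0 < c"
begin

lemma orientation_pos: "is_orientation a b c d1 d2 d3 \<Longrightarrow> 0 < d1 \<and> 0 < d2 \<and> 0 < d3"
  using dims_pos by (auto simp: is_orientation_def)

lemma brick_corner:
  "is_brick a b c B \<Longrightarrow>
    \<exists>x y z d1 d2 d3. is_orientation a b c d1 d2 d3 \<and> B = brick_at x y z d1 d2 d3 \<and> (x, y, z) \<in> B"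
proof -
  assume "is_brick a b c B"
  then obtain x y z d1 d2 d3 where "is_orientation a b c d1 d2 d3" "B = brick_at x y z d1 d2 d3"
    by (auto simp: is_brick_def)
  moreover from this have "(x, y, z) \<in> B" by (auto simp: brick_at_def dest: orientation_pos)
  ultimately show ?thesis by blast
qed

lemma region_tilings_empty: "region_tilings a b c {} = {{}}"
  using brick_corner by (fastforce simp: region_tilings_def)

lemma tiling_count_lift: "tiling_count a b c (lift ` A) = tiling_count a b c A"
proof (rule tiling_count_image[OF inj_lift])
  show "is_brick a b c (lift ` B)" if "is_brick a b c B" for B
    using that by (metis is_brick_def lift_brick_at)
  show "is_brick a b c (lift -` B)" if brick: "is_brick a b c B" and sub: "B \<subseteq> lift ` A" for B
  proof -
    obtain x y z d1 d2 d3 where o: "is_orientation a b c d1 d2 d3"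
      and B: "B = brick_at x y z d1 d2 d3" and "(x, y, z) \<in> B"
      using brick_corner[OF brick] by blast
    with sub obtain z' where "z = Suc z'" by (auto simp: lift_def)
    then have "lift -` B = brick_at x y z' d1 d2 d3"
      by (simp add: B lift_brick_at[symmetric] inj_vimage_image_eq[OF inj_lift])
    with o show ?thesis unfolding is_brick_def by blast
  qed
qed

end

section \<open>Filling a box layer by layer\<close>

definition completion_count :: "nat \<Rightarrow> nat \<Rightarrow> nat \<Rightarrow> nat \<Rightarrow> nat \<Rightarrow> cell set \<Rightarrow> nat \<Rightarrow> nat" where
  "completion_count k l a b c S h = tiling_count a b c (box_cells k l h - S)"

definition orientations :: "nat \<Rightarrow> nat \<Rightarrow> nat \<Rightarrow> (nat \<times> nat \<times> nat) list" where
  "orientations a b c = remdups [(a, b, c), (a, c, b), (b, a, c), (b, c, a), (c, a, b), (c, b, a)]"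

lemma set_orientations: "(d1, d2, d3) \<in> set (orientations a b c) \<longleftrightarrow> is_orientation a b c d1 d2 d3"
  unfolding orientations_def set_remdups is_orientation_def by simp

lemma distinct_orientations: "distinct (orientations a b c)"
  unfolding orientations_def by (rule distinct_remdups)

definition brick_cells :: "nat \<Rightarrow> nat \<Rightarrow> nat \<times> nat \<times> nat \<Rightarrow> cell list" where
  "brick_cells x y d = (case d of (d1, d2, d3) \<Rightarrow>
     [(i, j, z). i \<leftarrow> [x..<x + d1], j \<leftarrow> [y..<y + d2], z \<leftarrow> [0..<d3]])"

lemma set_brick_cells: "set (brick_cells x y (d1, d2, d3)) = brick_at x y 0 d1 d2 d3"
  by (auto simp: brick_cells_def brick_at_def)

text \<open>Profiles are kept sorted and duplicate-free, so that equal profiles are equal lists and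
  collect_terms can merge them.\<close>

definition lower_cells :: "cell list \<Rightarrow> cell list" where
  "lower_cells xs = sort (remdups [(x, y, z - 1). (x, y, z) \<leftarrow> xs, 0 < z])"

lemma set_lower_cells: "set (lower_cells xs) = lift -` set xs"
  by (force simp: lower_cells_def lift_def)

text \<open>Listed row by row, so that no free cell of the bottom layer lies weakly below and to the
  left of the first free one; a brick covering that cell must have it as its corner.\<close>

definition bottom_layer :: "nat \<Rightarrow> nat \<Rightarrow> cell list" where
  "bottom_layer k l = map (\<lambda>i. (i mod k, i div k, 0)) [0..<k * l]"

lemma in_bottom_layer:
  assumes "x < k" and "y < l"
  shows "(x, y, 0) \<in> set (bottom_layer k l)"
proof -
  have "y * k + x < Suc y * k" using assms(1) by simp
  also have "\<dots> \<le> l * k" using assms(2) by (intro mult_le_mono1) simp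
  finally show ?thesis
    using assms(1) by (auto simp: bottom_layer_def image_iff mult.commute intro!: bexI[of _ "y * k + x"])
qed

definition free_bottom_cells :: "nat \<Rightarrow> nat \<Rightarrow> cell list \<Rightarrow> cell list" where
  "free_bottom_cells k l xs = filter (\<lambda>p. p \<notin> set xs) (bottom_layer k l)"

lemma filter_upt_eq_Cons:
  assumes "filter P [0..<n] = i # is" and "j < i"
  shows "\<not> P j"
proof -
  obtain us vs where split: "[0..<n] = us @ i # vs" and "\<forall>u\<in>set us. \<not> P u"
    using assms(1) by (auto simp: filter_eq_Cons_iff)
  moreover have "\<forall>v\<in>set vs. i < v"
    using sorted_wrt_upt[of 0 n] by (simp add: split sorted_wrt_append)
  moreover have "j \<in> set (us @ i # vs)"
  proof -
    have "i \<in> set [0..<n]" unfolding split by simp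
    with assms(2) have "j \<in> set [0..<n]" by simp
    then show ?thesis by (simp only: split)
  qed
  ultimately show ?thesis using assms(2) by auto
qed

lemma first_free_bottom_cell:
  assumes "free_bottom_cells k l xs = (x, y, z) # rest"
  shows "z = 0" "x < k" "y < l" "(x, y, 0) \<notin> set xs"
    and "\<And>x' y'. x' \<le> x \<Longrightarrow> y' \<le> y \<Longrightarrow> (x', y') \<noteq> (x, y) \<Longrightarrow> (x', y', 0) \<in> set xs"
proof -
  let ?f = "\<lambda>i. (i mod k, i div k, 0::nat)"
  obtain i is' where i: "filter (\<lambda>i. ?f i \<notin> set xs) [0..<k * l] = i # is'" and xyz: "?f i = (x, y, z)"
    using assms by (auto simp: free_bottom_cells_def bottom_layer_def filter_map o_def)
  have "i \<in> set (filter (\<lambda>i. ?f i \<notin> set xs) [0..<k * l])" using i by simp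
  then have "i < l * k" "?f i \<notin> set xs" by (simp_all add: mult.commute)
  then have "0 < k" by (cases k) auto
  then show "z = 0" "x < k" "y < l" "(x, y, 0) \<notin> set xs"
    using xyz \<open>i < l * k\<close> \<open>?f i \<notin> set xs\<close> by (auto simp: less_mult_imp_div_less)
  have i_eq: "i = y * k + x" using xyz by auto
  fix x' y' assume "x' \<le> x" "y' \<le> y" "(x', y') \<noteq> (x, y)"
  have "y' * k + x' < i"
  proof (cases "y' < y")
    case True
    then have "y' * k + x' < Suc y' * k" using \<open>x' \<le> x\<close> \<open>x < k\<close> by simp
    also have "\<dots> \<le> y * k" using True by (intro mult_le_mono1) simp
    finally show ?thesis by (simp add: i_eq)
  next
    case False
    with \<open>y' \<le> y\<close> \<open>x' \<le> x\<close> \<open>(x', y') \<noteq> (x, y)\<close> show ?thesis by (simp add: i_eq)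
  qed
  then have "?f (y' * k + x') \<in> set xs" using filter_upt_eq_Cons[OF i] by blast
  then show "(x', y', 0) \<in> set xs" using \<open>x < k\<close> \<open>x' \<le> x\<close> by simp
qed

lemma fewer_free_bottom_cells:
  assumes "free_bottom_cells k l xs = (x, y, z) # rest" and "(x, y, 0) \<in> set ys"
  shows "length (free_bottom_cells k l (ys @ xs)) < Suc (length rest)"
proof -
  have "(x, y, 0) \<in> set (free_bottom_cells k l xs)"
    using assms(1) first_free_bottom_cell(1) by simp
  then have "length (filter (\<lambda>p. p \<notin> set ys) (free_bottom_cells k l xs)) < length (free_bottom_cells k l xs)"
    using assms(2) by (intro length_filter_less) auto
  then show ?thesis using assms(1) by (simp add: free_bottom_cells_def filter_filter conj_commute)
qed

text \<open>Bricks are tested against a height cap instead of the box height h: every cap with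
  min h (largest brick dimension) \<le> cap \<le> h gives the same answer (fits_iff), and a fixed
  cap makes one layer of filling independent of h. The first conjunct fails only for degenerate
  bricks; it makes fill_layer terminate unconditionally.\<close>

definition fits :: "nat \<Rightarrow> nat \<Rightarrow> nat \<Rightarrow> cell list \<Rightarrow> nat \<Rightarrow> nat \<Rightarrow> nat \<times> nat \<times> nat \<Rightarrow> bool" where
  "fits k l cap xs x y d \<longleftrightarrow> (x, y, 0) \<in> set (brick_cells x y d) \<and>
     (\<forall>(i, j, z)\<in>set (brick_cells x y d). i < k \<and> j < l \<and> z < cap \<and> (i, j, z) \<notin> set xs)"

lemma fits_corner: "fits k l cap xs x y d \<Longrightarrow> (x, y, 0) \<in> set (brick_cells x y d)"
  by (simp add: fits_def)

function fill_layer :: "nat \<Rightarrow> nat \<Rightarrow> nat \<Rightarrow> nat \<Rightarrow> nat \<Rightarrow> nat \<Rightarrow> cell list \<Rightarrow> cell list list" where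
  "fill_layer k l a b c cap xs = (case free_bottom_cells k l xs of
      [] \<Rightarrow> [lower_cells xs]
    | (x, y, _) # _ \<Rightarrow> concat (map (\<lambda>d. fill_layer k l a b c cap (brick_cells x y d @ xs))
                          (filter (fits k l cap xs x y) (orientations a b c))))"
  by pat_completeness auto
termination
  by (relation "measure (\<lambda>(k, l, a, b, c, cap, xs). length (free_bottom_cells k l xs))")
    (auto dest: fits_corner intro: fewer_free_bottom_cells)

declare fill_layer.simps [simp del]

lemma sum_list_map_concat: "(\<Sum>x\<leftarrow>concat xss. f x) = (\<Sum>xs\<leftarrow>xss. \<Sum>x\<leftarrow>xs. f x)"
  by (induction xss) auto

context brick_shape
begin

lemma completion_count_height_0: "completion_count k l a b c S 0 = 1"
  by (simp add: completion_count_def tiling_count_def box_cells_def region_tilings_empty)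

lemma completion_count_full_bottom:
  assumes "\<And>x y. x < k \<Longrightarrow> y < l \<Longrightarrow> (x, y, 0) \<in> S"
  shows "completion_count k l a b c S (Suc h) = completion_count k l a b c (lift -` S) h"
proof -
  have "box_cells k l (Suc h) - S = lift ` (box_cells k l h - lift -` S)"
  proof
    show "box_cells k l (Suc h) - S \<subseteq> lift ` (box_cells k l h - lift -` S)"
    proof clarify
      fix x y z assume "(x, y, z) \<in> box_cells k l (Suc h)" "(x, y, z) \<notin> S"
      moreover from this obtain z' where "z = Suc z'"
        using assms by (cases z) (auto simp: box_cells_def)
      ultimately show "(x, y, z) \<in> lift ` (box_cells k l h - lift -` S)"
        by (auto simp: box_cells_def lift_def intro!: image_eqI[of _ _ "(x, y, z')"])
    qed
    show "lift ` (box_cells k l h - lift -` S) \<subseteq> box_cells k l (Suc h) - S"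
      by (auto simp: box_cells_def lift_def)
  qed
  then show ?thesis by (simp add: completion_count_def tiling_count_lift)
qed

lemma inj_on_brick_cells: "inj_on (\<lambda>d. set (brick_cells x y d)) (set (orientations a b c))"
proof (rule inj_onI)
  fix d e assume "d \<in> set (orientations a b c)" "e \<in> set (orientations a b c)"
    and eq: "set (brick_cells x y d) = set (brick_cells x y e)"
  moreover obtain d1 d2 d3 e1 e2 e3 where de: "d = (d1, d2, d3)" "e = (e1, e2, e3)"
    by (cases d, cases e)
  ultimately have "0 < d1 \<and> 0 < d2 \<and> 0 < d3" "0 < e1 \<and> 0 < e2 \<and> 0 < e3"
    and "brick_at x y 0 d1 d2 d3 = brick_at x y 0 e1 e2 e3"
    by (simp_all add: set_orientations orientation_pos set_brick_cells)
  then show "d = e"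
    using brick_at_subset_dims[of d1 d2 d3 x y 0 e1 e2 e3] brick_at_subset_dims[of e1 e2 e3 x y 0 d1 d2 d3]
    by (simp add: de)
qed

lemma completion_count_split_corner:
  assumes free: "(x, y, 0) \<in> box_cells k l h - S"
    and lowest: "\<And>x' y'. x' \<le> x \<Longrightarrow> y' \<le> y \<Longrightarrow> (x', y') \<noteq> (x, y) \<Longrightarrow> (x', y', 0) \<notin> box_cells k l h - S"
  shows "completion_count k l a b c S h =
    (\<Sum>d\<in>{d \<in> set (orientations a b c). set (brick_cells x y d) \<subseteq> box_cells k l h - S}.
       completion_count k l a b c (S \<union> set (brick_cells x y d)) h)"
proof -
  let ?R = "box_cells k l h - S"
  let ?D = "{d \<in> set (orientations a b c). set (brick_cells x y d) \<subseteq> ?R}"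
  have bricks: "{B. is_brick a b c B \<and> (x, y, 0) \<in> B \<and> B \<subseteq> ?R} = (\<lambda>d. set (brick_cells x y d)) ` ?D"
  proof (intro equalityI subsetI)
    fix B assume "B \<in> {B. is_brick a b c B \<and> (x, y, 0) \<in> B \<and> B \<subseteq> ?R}"
    then obtain x' y' z' d1 d2 d3 where o: "is_orientation a b c d1 d2 d3"
      and B: "B = brick_at x' y' z' d1 d2 d3" "(x', y', z') \<in> B" "(x, y, 0) \<in> B" "B \<subseteq> ?R"
      using brick_corner by blast
    then have "x' \<le> x" "y' \<le> y" "z' = 0" by (auto simp: brick_at_def)
    with B lowest have "x' = x" "y' = y" by blast+
    with B o \<open>z' = 0\<close> show "B \<in> (\<lambda>d. set (brick_cells x y d)) ` ?D"
      by (auto simp: set_brick_cells set_orientations intro!: image_eqI[of _ _ "(d1, d2, d3)"])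
  next
    fix B assume "B \<in> (\<lambda>d. set (brick_cells x y d)) ` ?D"
    then obtain d1 d2 d3 where o: "is_orientation a b c d1 d2 d3"
      and B: "B = brick_at x y 0 d1 d2 d3" "B \<subseteq> ?R"
      by (auto simp: set_orientations set_brick_cells)
    moreover have "is_brick a b c B" unfolding is_brick_def using o B by blast
    moreover have "(x, y, 0) \<in> B" using orientation_pos[OF o] B by (simp add: brick_at_def)
    ultimately show "B \<in> {B. is_brick a b c B \<and> (x, y, 0) \<in> B \<and> B \<subseteq> ?R}" by blast
  qed
  have "completion_count k l a b c S h = (\<Sum>B\<in>(\<lambda>d. set (brick_cells x y d)) ` ?D. tiling_count a b c (?R - B))"
    unfolding completion_count_def bricks[symmetric]
    by (rule tiling_count_split[OF _ free]) (simp add: box_cells_def)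
  also have "\<dots> = (\<Sum>d\<in>?D. tiling_count a b c (?R - set (brick_cells x y d)))"
    by (rule sum.reindex[OF inj_on_subset[OF inj_on_brick_cells], unfolded o_def]) auto
  also have "\<dots> = (\<Sum>d\<in>?D. completion_count k l a b c (S \<union> set (brick_cells x y d)) h)"
    by (simp add: completion_count_def Diff_eq Int_assoc)
  finally show ?thesis .
qed

lemma fits_iff:
  assumes "d \<in> set (orientations a b c)" and cap: "min (Suc h) (max a (max b c)) \<le> cap" "cap \<le> Suc h"
  shows "fits k l cap xs x y d \<longleftrightarrow> set (brick_cells x y d) \<subseteq> box_cells k l (Suc h) - set xs"
proof -
  obtain d1 d2 d3 where d: "d = (d1, d2, d3)" by (cases d)
  with assms(1) have o: "is_orientation a b c d1 d2 d3" by (simp add: set_orientations)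
  then have "(x, y, 0) \<in> brick_at x y 0 d1 d2 d3"
    using orientation_pos[OF o] by (simp add: brick_at_def)
  then have "fits k l cap xs x y d \<longleftrightarrow>
      (\<forall>(i, j, z)\<in>brick_at x y 0 d1 d2 d3. i < k \<and> j < l \<and> z < cap \<and> (i, j, z) \<notin> set xs)"
    by (simp add: fits_def d set_brick_cells)
  also have "\<dots> \<longleftrightarrow>
      (\<forall>(i, j, z)\<in>brick_at x y 0 d1 d2 d3. i < k \<and> j < l \<and> z < Suc h \<and> (i, j, z) \<notin> set xs)"
  proof -
    have "d3 \<le> max a (max b c)" using o by (auto simp: is_orientation_def)
    then have "z < cap \<longleftrightarrow> z < Suc h" if "z < d3" for z
      using that cap by (auto simp: min_le_iff_disj)
    then show ?thesis by (auto simp: brick_at_def)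
  qed
  also have "\<dots> \<longleftrightarrow> set (brick_cells x y d) \<subseteq> box_cells k l (Suc h) - set xs"
    by (auto simp: d set_brick_cells box_cells_def)
  finally show ?thesis .
qed

lemma completion_count_fill_layer:
  assumes cap: "min (Suc h) (max a (max b c)) \<le> cap" "cap \<le> Suc h"
  shows "completion_count k l a b c (set xs) (Suc h) =
    (\<Sum>ys\<leftarrow>fill_layer k l a b c cap xs. completion_count k l a b c (set ys) h)"
proof (induction "length (free_bottom_cells k l xs)" arbitrary: xs rule: less_induct)
  case less
  show ?case
  proof (cases "free_bottom_cells k l xs")
    case Nil
    then have "(x, y, 0) \<in> set xs" if "x < k" "y < l" for x y
      using in_bottom_layer[OF that] by (auto simp: free_bottom_cells_def filter_empty_conv)
    moreover have "fill_layer k l a b c cap xs = [lower_cells xs]"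
      by (subst fill_layer.simps) (simp add: Nil)
    ultimately show ?thesis by (simp add: completion_count_full_bottom set_lower_cells)
  next
    case (Cons p rest)
    obtain x y z where first: "free_bottom_cells k l xs = (x, y, z) # rest"
      using Cons by (cases p) auto
    let ?ds = "filter (fits k l cap xs x y) (orientations a b c)"
    have free: "(x, y, 0) \<in> box_cells k l (Suc h) - set xs"
      using first_free_bottom_cell(2-4)[OF first] by (simp add: box_cells_def)
    have lowest: "(x', y', 0) \<notin> box_cells k l (Suc h) - set xs"
      if "x' \<le> x" "y' \<le> y" "(x', y') \<noteq> (x, y)" for x' y'
      using first_free_bottom_cell(5)[OF first that] by simp
    have ds: "{d \<in> set (orientations a b c). set (brick_cells x y d) \<subseteq> box_cells k l (Suc h) - set xs}
        = set ?ds"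
      using fits_iff[OF _ cap] by auto
    have "completion_count k l a b c (set xs) (Suc h) =
        (\<Sum>d\<in>set ?ds. completion_count k l a b c (set (brick_cells x y d @ xs)) (Suc h))"
      using completion_count_split_corner[OF free lowest] ds by (simp add: Un_commute)
    also have "\<dots> = (\<Sum>d\<leftarrow>?ds. completion_count k l a b c (set (brick_cells x y d @ xs)) (Suc h))"
      by (rule sum.distinct_set_conv_list) (simp add: distinct_orientations)
    also have "\<dots> = (\<Sum>d\<leftarrow>?ds. \<Sum>ys\<leftarrow>fill_layer k l a b c cap (brick_cells x y d @ xs).
        completion_count k l a b c (set ys) h)"
    proof -
      have IH: "completion_count k l a b c (set (brick_cells x y d @ xs)) (Suc h) =
          (\<Sum>ys\<leftarrow>fill_layer k l a b c cap (brick_cells x y d @ xs). completion_count k l a b c (set ys) h)"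
        if "d \<in> set ?ds" for d
      proof (rule less)
        show "length (free_bottom_cells k l (brick_cells x y d @ xs)) < length (free_bottom_cells k l xs)"
          using that fewer_free_bottom_cells[OF first fits_corner, of k l cap xs] by (simp add: first)
      qed
      show ?thesis
        by (rule arg_cong[where f = sum_list], rule map_cong[OF refl]) (rule IH)
    qed
    also have "fill_layer k l a b c cap xs = concat (map (\<lambda>d. fill_layer k l a b c cap (brick_cells x y d @ xs)) ?ds)"
      by (subst fill_layer.simps) (simp add: first)
    ultimately show ?thesis by (simp add: sum_list_map_concat o_def)
  qed
qed

end

section \<open>Transfer between layers\<close>

fun add_term :: "nat \<times> 'a::linorder \<Rightarrow> (nat \<times> 'a) list \<Rightarrow> (nat \<times> 'a) list" where
  "add_term t [] = [t]"
| "add_term (w, x) ((v, y) # ts) =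
     (if x = y then (w + v, x) # ts
      else if x < y then (w, x) # (v, y) # ts
      else (v, y) # add_term (w, x) ts)"

definition collect_terms :: "(nat \<times> 'a::linorder) list \<Rightarrow> (nat \<times> 'a) list" where
  "collect_terms ts = foldr add_term ts []"

definition weighted_sum :: "('a \<Rightarrow> nat) \<Rightarrow> (nat \<times> 'a) list \<Rightarrow> nat" where
  "weighted_sum f ts = (\<Sum>(w, x)\<leftarrow>ts. w * f x)"

definition scale :: "nat \<Rightarrow> (nat \<times> 'a) list \<Rightarrow> (nat \<times> 'a) list" where
  "scale c ts = map (\<lambda>(w, x). (c * w, x)) ts"

lemma weighted_sum_simps [simp]:
  "weighted_sum f [] = 0"
  "weighted_sum f ((w, x) # ts) = w * f x + weighted_sum f ts"
  "weighted_sum f (ts @ us) = weighted_sum f ts + weighted_sum f us"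
  by (simp_all add: weighted_sum_def)

lemma weighted_sum_scale: "weighted_sum f (scale c ts) = c * weighted_sum f ts"
  by (induction ts) (auto simp: scale_def algebra_simps)

lemma weighted_sum_add_term: "weighted_sum f (add_term t ts) = weighted_sum f (t # ts)"
  by (induction t ts rule: add_term.induct) (auto simp: algebra_simps)

lemma weighted_sum_collect_terms: "weighted_sum f (collect_terms ts) = weighted_sum f ts"
  by (induction ts) (auto simp: collect_terms_def weighted_sum_add_term)

type_synonym profile_vector = "(nat \<times> cell list) list"

definition next_layer :: "nat \<Rightarrow> nat \<Rightarrow> nat \<Rightarrow> nat \<Rightarrow> nat \<Rightarrow> nat \<Rightarrow> profile_vector \<Rightarrow> profile_vector" where
  "next_layer k l a b c cap ts =
     collect_terms (concat (map (\<lambda>(w, xs). map (Pair w) (fill_layer k l a b c cap xs)) ts))"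

fun descend :: "nat \<Rightarrow> nat \<Rightarrow> nat \<Rightarrow> nat \<Rightarrow> nat \<Rightarrow> nat \<Rightarrow> profile_vector \<Rightarrow> profile_vector" where
  "descend k l a b c 0 ts = ts"
| "descend k l a b c (Suc h) ts = descend k l a b c h (next_layer k l a b c (Suc h) ts)"

context brick_shape
begin

lemma weighted_sum_next_layer:
  assumes "min (Suc h) (max a (max b c)) \<le> cap" and "cap \<le> Suc h"
  shows "weighted_sum (\<lambda>xs. completion_count k l a b c (set xs) (Suc h)) ts =
    weighted_sum (\<lambda>xs. completion_count k l a b c (set xs) h) (next_layer k l a b c cap ts)"
proof -
  have "weighted_sum f (map (Pair w) yss) = w * (\<Sum>ys\<leftarrow>yss. f ys)" for f w and yss :: "cell list list"
    by (induction yss) (auto simp: algebra_simps)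
  then show ?thesis
    by (induction ts) (auto simp: next_layer_def weighted_sum_collect_terms
        completion_count_fill_layer[OF assms])
qed

lemma weighted_sum_iterate_next_layer:
  assumes "max a (max b c) \<le> cap" and "cap \<le> Suc h"
  shows "weighted_sum (\<lambda>xs. completion_count k l a b c (set xs) (h + n)) ts =
    weighted_sum (\<lambda>xs. completion_count k l a b c (set xs) h) ((next_layer k l a b c cap ^^ n) ts)"
proof (induction n arbitrary: ts)
  case (Suc n)
  have "weighted_sum (\<lambda>xs. completion_count k l a b c (set xs) (Suc (h + n))) ts =
      weighted_sum (\<lambda>xs. completion_count k l a b c (set xs) (h + n)) (next_layer k l a b c cap ts)"
    using assms by (intro weighted_sum_next_layer) auto
  then show ?case by (simp only: add_Suc_right Suc.IH funpow_Suc_right o_apply)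
qed simp

lemma weighted_sum_descend:
  "weighted_sum (\<lambda>xs. completion_count k l a b c (set xs) h) ts = weighted_sum (\<lambda>_. 1) (descend k l a b c h ts)"
proof (induction h arbitrary: ts)
  case 0
  then show ?case by (simp add: completion_count_height_0)
next
  case (Suc h)
  then show ?case using weighted_sum_next_layer[of h "Suc h" k l ts] by simp
qed

end

section \<open>The 3 x 3 x n box and 1 x 2 x 3 bricks\<close>

interpretation brick_123: brick_shape 1 2 3
  by unfold_locales simp_all

abbreviation box_count :: "nat \<Rightarrow> nat" where
  "box_count h \<equiv> completion_count 3 3 1 2 3 {} h"

abbreviation layer_step :: "profile_vector \<Rightarrow> profile_vector" where
  "layer_step \<equiv> next_layer 3 3 1 2 3 3"

definition empty_profile :: profile_vector where
  "empty_profile = [(1, [])]"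

lemma weighted_sum_empty_profile [simp]: "weighted_sum f empty_profile = f []"
  by (simp add: empty_profile_def)

text \<open>V2, V4, V6 are the profile vectors reached from the empty profile after 2, 4 and 6
  layers; the three sums are the counts for boxes of height 2, 4 and 6.\<close>

definition layer_certificate :: bool where
  "layer_certificate =
     (let V2 = (layer_step ^^ 2) empty_profile; V4 = (layer_step ^^ 2) V2; V6 = (layer_step ^^ 2) V4 in
      V6 = collect_terms (scale 7 V4 @ scale 22 V2 @ scale 36 empty_profile) \<and>
      map (\<lambda>V. weighted_sum (\<lambda>_. 1) (descend 3 3 1 2 3 2 V)) [empty_profile, V2, V4] = [6, 64, 616])"

lemma layer_certificate: layer_certificate
  unfolding layer_certificate_def by code_simp

lemma funpow_apply_funpow: "(f ^^ m) ((f ^^ n) x) = (f ^^ (m + n)) x"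
  by (simp add: funpow_add)

lemma six_layers:
  "(layer_step ^^ 6) empty_profile = collect_terms
     (scale 7 ((layer_step ^^ 4) empty_profile) @ scale 22 ((layer_step ^^ 2) empty_profile) @ scale 36 empty_profile)"
  and descend_values:
  "weighted_sum (\<lambda>_. 1) (descend 3 3 1 2 3 2 empty_profile) = 6"
  "weighted_sum (\<lambda>_. 1) (descend 3 3 1 2 3 2 ((layer_step ^^ 2) empty_profile)) = 64"
  "weighted_sum (\<lambda>_. 1) (descend 3 3 1 2 3 2 ((layer_step ^^ 4) empty_profile)) = 616"
  using layer_certificate by (simp_all add: layer_certificate_def Let_def funpow_apply_funpow)

lemma box_count_layers:
  assumes "2 \<le> h"
  shows "box_count (h + n) =
    weighted_sum (\<lambda>xs. completion_count 3 3 1 2 3 (set xs) h) ((layer_step ^^ n) empty_profile)"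
  using brick_123.weighted_sum_iterate_next_layer[of 3 h 3 3 n empty_profile] assms by simp

lemma box_count_values: "box_count 0 = 1" "box_count 2 = 6" "box_count 4 = 64" "box_count 6 = 616"
proof -
  have "box_count (2 + n) = weighted_sum (\<lambda>_. 1) (descend 3 3 1 2 3 2 ((layer_step ^^ n) empty_profile))" for n
    using box_count_layers[of 2 n] brick_123.weighted_sum_descend[of 3 3 2] by simp
  from this[of 0] this[of 2] this[of 4] show "box_count 2 = 6" "box_count 4 = 64" "box_count 6 = 616"
    using descend_values by simp_all
qed (rule brick_123.completion_count_height_0)

lemma box_count_recurrence:
  assumes "2 \<le> h"
  shows "box_count (h + 6) = 7 * box_count (h + 4) + 22 * box_count (h + 2) + 36 * box_count h"
proof -
  let ?F = "\<lambda>xs. completion_count 3 3 1 2 3 (set xs) h"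
  have "box_count (h + 6) = weighted_sum ?F ((layer_step ^^ 6) empty_profile)"
    by (rule box_count_layers[OF assms])
  also have "\<dots> = 7 * weighted_sum ?F ((layer_step ^^ 4) empty_profile)
      + 22 * weighted_sum ?F ((layer_step ^^ 2) empty_profile) + 36 * weighted_sum ?F empty_profile"
    unfolding six_layers by (simp add: weighted_sum_collect_terms weighted_sum_scale)
  also have "\<dots> = 7 * box_count (h + 4) + 22 * box_count (h + 2) + 36 * box_count h"
    using box_count_layers[OF assms, of 4] box_count_layers[OF assms, of 2] by simp
  finally show ?thesis .
qed

section \<open>The generating function\<close>

lemma T_eq_box_count: "T (3 * j) = box_count (2 * j)"
proof -
  have "card P = 3 * j" if "P \<in> tilings 3 3 (2 * j) 1 2 3" for P
    using card_tiled_region[of P 1 2 3 "box_cells 3 3 (2 * j)"] that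
    by (simp add: tilings_eq_region_tilings box_cells_def card_cartesian_product)
  then have "{P \<in> tilings 3 3 (2 * j) 1 2 3. card P = 3 * j} = tilings 3 3 (2 * j) 1 2 3" by blast
  then show ?thesis
    by (simp add: T_def completion_count_def tiling_count_def tilings_eq_region_tilings)
qed

lemma T_not_mult_3: "\<not> 3 dvd N \<Longrightarrow> T N = 0"
  by (simp add: T_def)

lemma T_initial: "T 0 = 1" "T 3 = 6" "T 6 = 64" "T 9 = 616"
  using T_eq_box_count[of 0] T_eq_box_count[of 1] T_eq_box_count[of 2] T_eq_box_count[of 3]
    box_count_values by simp_all

lemma T_recurrence:
  assumes "9 \<le> N"
  shows "T N = 7 * T (N - 3) + 22 * T (N - 6) + 36 * T (N - 9)"
proof (cases "3 dvd N")
  case True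
  then obtain j where N: "N = 3 * j" and "3 \<le> j" using assms by auto
  show ?thesis
  proof (cases "j = 3")
    case True
    then show ?thesis using N T_initial by simp
  next
    case False
    have shifts: "3 * j - 3 = 3 * (j - 1)" "3 * j - 6 = 3 * (j - 2)" "3 * j - 9 = 3 * (j - 3)" by auto
    have "2 \<le> 2 * (j - 3)" "2 * (j - 3) + 6 = 2 * j" "2 * (j - 3) + 4 = 2 * (j - 1)"
      "2 * (j - 3) + 2 = 2 * (j - 2)" using \<open>3 \<le> j\<close> False by auto
    then have "box_count (2 * j) =
        7 * box_count (2 * (j - 1)) + 22 * box_count (2 * (j - 2)) + 36 * box_count (2 * (j - 3))"
      using box_count_recurrence[of "2 * (j - 3)"] by simp
    then show ?thesis by (simp add: N shifts T_eq_box_count)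
  qed
next
  case False
  then have "\<not> 3 dvd (N - 3)" "\<not> 3 dvd (N - 6)" "\<not> 3 dvd (N - 9)" using assms by presburger+
  then show ?thesis using False by (simp add: T_not_mult_3)
qed

lemma Abs_fps_times_denominator_nth:
  fixes f :: "nat \<Rightarrow> 'a::comm_ring_1"
  shows "(Abs_fps f * (1 - 7 * fps_X ^ 3 - 22 * fps_X ^ 6 - 36 * fps_X ^ 9)) $ n =
    f n - (if n < 3 then 0 else 7 * f (n - 3)) - (if n < 6 then 0 else 22 * f (n - 6))
      - (if n < 9 then 0 else 36 * f (n - 9))"
proof -
  have "Abs_fps f * (1 - 7 * fps_X ^ 3 - 22 * fps_X ^ 6 - 36 * fps_X ^ 9) = Abs_fps f
      - fps_const 7 * (fps_X ^ 3 * Abs_fps f) - fps_const 22 * (fps_X ^ 6 * Abs_fps f)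
      - fps_const 36 * (fps_X ^ 9 * Abs_fps f)"
    by (simp add: algebra_simps numeral_fps_const)
  then show ?thesis by (simp add: fps_X_power_mult_nth)
qed

lemma T_fps_times_denominator:
  "Abs_fps (\<lambda>N. of_nat (T N) :: rat) * (1 - 7 * fps_X ^ 3 - 22 * fps_X ^ 6 - 36 * fps_X ^ 9) = 1 - fps_X ^ 3"
proof (rule fps_ext)
  fix N
  show "(Abs_fps (\<lambda>N. of_nat (T N)) * (1 - 7 * fps_X ^ 3 - 22 * fps_X ^ 6 - 36 * fps_X ^ 9)) $ N =
      (1 - fps_X ^ 3 :: rat fps) $ N"
  proof (cases "9 \<le> N")
    case True
    then show ?thesis
      using T_recurrence[OF True] by (simp add: Abs_fps_times_denominator_nth fps_X_power_nth)
  next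
    case False
    then have "N \<in> {0, 1, 2, 3, 4, 5, 6, 7, 8}" by auto
    then show ?thesis
      by (auto simp: Abs_fps_times_denominator_nth T_initial T_not_mult_3 fps_X_power_nth)
  qed
qed

theorem mainTheorem19:
  shows "Abs_fps (\<lambda>N. of_nat (T N) :: rat) =
    (1 - fps_X ^ 3) / (1 - 7 * fps_X ^ 3 - 22 * fps_X ^ 6 - 36 * fps_X ^ 9)"
proof -
  have "(1 - 7 * fps_X ^ 3 - 22 * fps_X ^ 6 - 36 * fps_X ^ 9 :: rat fps) \<noteq> 0"
    by (rule fps_nonzeroI[of _ 0]) simp
  then show ?thesis using T_fps_times_denominator by (metis nonzero_mult_div_cancel_right)
qed

end
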